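(* The intersection of an $\ell_1$-convex set and an interval in $\mathbb{R}^n$ is $\ell_1$-convex.
   Context: A subset $Z\subseteq\mathbb{R}^n$ is $\ell_1$-convex if for all $z,z'\in Z$, with $D=\sum_i|z_i-z'_i|$, there is $\gamma\colon[0,D]\to Z$ with $\gamma(0)=z,\gamma(D)=z'$ and $\sum_i|\gamma_i(t)-\gamma_i(t')|=|t-t'|$ for all $t,t'$. An interval in $\mathbb{R}^n$ is a set $\prod_{i=1}^n I_i$ with each $I_i\subseteq\mathbb{R}$ a (possibly empty, possibly unbounded) interval. *)

theory Defs
  imports "HOL-Analysis.Analysis"
begin

definition l1_dist :: "real ^ 'n \<Rightarrow> real ^ 'n \<Rightarrow> real" where
  "l1_dist z z' = (\<Sum>i\<in>UNIV. \<bar>z $ i - z' $ i\<bar>)"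

definition l1_convex :: "(real ^ 'n) set \<Rightarrow> bool" where
  "l1_convex Z \<longleftrightarrow>
     (\<forall>z\<in>Z. \<forall>z'\<in>Z. \<exists>\<gamma> :: real \<Rightarrow> real ^ 'n.
        \<gamma> 0 = z \<and> \<gamma> (l1_dist z z') = z' \<and>
        \<gamma> ` {0..l1_dist z z'} \<subseteq> Z \<and>
        (\<forall>t\<in>{0..l1_dist z z'}. \<forall>t'\<in>{0..l1_dist z z'}.
            l1_dist (\<gamma> t) (\<gamma> t') = \<bar>t - t'\<bar>))"

definition box_interval :: "(real ^ 'n) set \<Rightarrow> bool" where
  "box_interval B \<longleftrightarrow>
     (\<exists>I :: 'n \<Rightarrow> real set. (\<forall>i. is_interval (I i)) \<and>
        B = {x. \<forall>i. x $ i \<in> I i})"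

end

theory Submission
  imports Defs
begin

text \<open>Every point y on an l1-geodesic from z to z' satisfies
  d(z,y) + d(y,z') = d(z,z'). Since d is the sum of the coordinate distances and each
  coordinate obeys the triangle inequality, equality must hold in every coordinate, i.e.
  each coordinate of y lies between those of z and z'. An interval in R^n is a product of
  real intervals, so it contains y whenever it contains z and z'; hence the geodesic
  joining two points of the intersection within Z stays in the interval as well.\<close>

lemma l1_between_componentwise:
  assumes "l1_dist z y + l1_dist y z' = l1_dist z z'"
  shows "\<bar>z $ i - y $ i\<bar> + \<bar>y $ i - z' $ i\<bar> = \<bar>z $ i - z' $ i\<bar>"
proof -
  have "(\<Sum>j\<in>UNIV. \<bar>z $ j - z' $ j\<bar>) = (\<Sum>j\<in>UNIV. \<bar>z $ j - y $ j\<bar> + \<bar>y $ j - z' $ j\<bar>)"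
    using assms unfolding l1_dist_def by (simp add: sum.distrib)
  then show ?thesis
    by (rule sum_mono_inv[symmetric]) auto
qed

lemma between_mem_is_interval:
  fixes a b c :: real
  assumes "is_interval S" "a \<in> S" "c \<in> S" "\<bar>a - b\<bar> + \<bar>b - c\<bar> = \<bar>a - c\<bar>"
  shows "b \<in> S"
proof -
  have "(a \<le> b \<and> b \<le> c) \<or> (c \<le> b \<and> b \<le> a)" using assms(4) by argo
  then show ?thesis using assms(1-3) unfolding is_interval_1 by blast
qed

lemma box_interval_l1_between:
  assumes "box_interval B" "z \<in> B" "z' \<in> B"
    and "l1_dist z y + l1_dist y z' = l1_dist z z'"
  shows "y \<in> B"
proof -
  obtain I where I: "\<And>i. is_interval (I i)" and B: "B = {x. \<forall>i. x $ i \<in> I i}"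
    using assms(1) unfolding box_interval_def by blast
  have "y $ i \<in> I i" for i
    using between_mem_is_interval[OF I] l1_between_componentwise[OF assms(4)] assms(2,3) B
    by blast
  then show ?thesis using B by blast
qed

lemma l1_geodesic_between:
  assumes "\<gamma> 0 = z" "\<gamma> D = z'" "t \<in> {0..D}"
    and "\<forall>s\<in>{0..D}. \<forall>s'\<in>{0..D}. l1_dist (\<gamma> s) (\<gamma> s') = \<bar>s - s'\<bar>"
  shows "l1_dist z (\<gamma> t) + l1_dist (\<gamma> t) z' = l1_dist z z'"
proof -
  have "0 \<in> {0..D}" "D \<in> {0..D}" using assms(3) by auto
  then have "l1_dist z (\<gamma> t) = t" "l1_dist (\<gamma> t) z' = D - t" "l1_dist z z' = D"
    using assms by force+
  then show ?thesis by simp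
qed

theorem corollary1p9:
  fixes Z B :: "(real ^ 'n) set"
  assumes "l1_convex Z" and "box_interval B"
  shows "l1_convex (Z \<inter> B)"
  unfolding l1_convex_def
proof (intro ballI)
  fix z z' assume z: "z \<in> Z \<inter> B" and z': "z' \<in> Z \<inter> B"
  define D where "D = l1_dist z z'"
  obtain \<gamma> where \<gamma>: "\<gamma> 0 = z" "\<gamma> D = z'" "\<gamma> ` {0..D} \<subseteq> Z"
    and isometric: "\<forall>t\<in>{0..D}. \<forall>t'\<in>{0..D}. l1_dist (\<gamma> t) (\<gamma> t') = \<bar>t - t'\<bar>"
    using assms(1) z z' unfolding l1_convex_def D_def by blast
  have "\<gamma> t \<in> B" if "t \<in> {0..D}" for t
    using box_interval_l1_between[OF assms(2)] l1_geodesic_between[OF \<gamma>(1,2) that isometric] z z'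
    by blast
  with \<gamma> isometric show "\<exists>\<gamma>. \<gamma> 0 = z \<and> \<gamma> (l1_dist z z') = z' \<and> \<gamma> ` {0..l1_dist z z'} \<subseteq> Z \<inter> B \<and>
      (\<forall>t\<in>{0..l1_dist z z'}. \<forall>t'\<in>{0..l1_dist z z'}. l1_dist (\<gamma> t) (\<gamma> t') = \<bar>t - t'\<bar>)"
    unfolding D_def[symmetric] by blast
qed

end
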